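(* Let $n, r$ be positive integers with $n\geqslant\lceil r/2\rceil+2$. Then $m(L(K_n),r)\geqslant\lfloor (r+2)^2/8\rfloor$.
   Context: All graphs are finite, simple and undirected. For a nonnegative integer $r$ and a graph $G$, the $r$-neighbor bootstrap percolation process on $G$ starts with a set $A_0\subseteq V(G)$ of initially active vertices, and for $i\geqslant 1$, $A_i=A_{i-1}\cup\{v\in V(G) : |N(v)\cap A_{i-1}|\geqslant r\}$, where $N(v)$ is the set of neighbors of $v$. The set $A_0$ is a percolating set if $\bigcup_{i\geqslant 0}A_i=V(G)$; $m(G,r)$ is the minimum size of a percolating set. $L(G)$ is the line graph of $G$ (vertex set $E(G)$, two vertices adjacent iff the edges share an endpoint), and $K_n$ is the complete graph on $n$ vertices. *)

theory Defs
  imports Complex_Main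
begin

text \<open>A finite simple graph is given by a vertex set V and a symmetric irreflexive
  adjacency relation E (only its restriction to V matters).\<close>

definition nbhd :: "'a set \<Rightarrow> ('a \<Rightarrow> 'a \<Rightarrow> bool) \<Rightarrow> 'a \<Rightarrow> 'a set" where
  "nbhd V E v = {u \<in> V. E v u}"

fun boot_step :: "'a set \<Rightarrow> ('a \<Rightarrow> 'a \<Rightarrow> bool) \<Rightarrow> nat \<Rightarrow> 'a set \<Rightarrow> nat \<Rightarrow> 'a set" where
  "boot_step V E r A0 0 = A0"
| "boot_step V E r A0 (Suc i) =
     boot_step V E r A0 i \<union> {v \<in> V. card (nbhd V E v \<inter> boot_step V E r A0 i) \<ge> r}"

definition percolating :: "'a set \<Rightarrow> ('a \<Rightarrow> 'a \<Rightarrow> bool) \<Rightarrow> nat \<Rightarrow> 'a set \<Rightarrow> bool" where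
  "percolating V E r A0 \<longleftrightarrow> A0 \<subseteq> V \<and> (\<Union>i. boot_step V E r A0 i) = V"

definition min_perc :: "'a set \<Rightarrow> ('a \<Rightarrow> 'a \<Rightarrow> bool) \<Rightarrow> nat \<Rightarrow> nat" where
  "min_perc V E r = Min (card ` {A. percolating V E r A})"

text \<open>Line graph L(K_n) of the complete graph on {0..<n}: vertices are the edges
  (2-element subsets), adjacent iff distinct and sharing an endpoint.\<close>
definition LK_vertices :: "nat \<Rightarrow> nat set set" where
  "LK_vertices n = {e. e \<subseteq> {0..<n} \<and> card e = 2}"

definition LK_adj :: "nat set \<Rightarrow> nat set \<Rightarrow> bool" where
  "LK_adj e f \<longleftrightarrow> e \<noteq> f \<and> e \<inter> f \<noteq> {}"

end

theory Submission
  imports Defs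
begin

text \<open>Induction on r in steps of 4. If a percolating set A of L(K_W) is not everything,
  the first edge uw to become active has at least r active neighbours, each of which
  contains u or w. Deleting u and w, every remaining edge loses at most 4 neighbours, so
  the edges of A inside W - {u,w} percolate L(K_(W-{u,w})) with threshold r - 4, and they
  are disjoint from the r neighbours of uw. Hence |A| \<ge> r + \<lfloor>(r-2)^2/8\<rfloor> = \<lfloor>(r+2)^2/8\<rfloor>.\<close>

lemma boot_step_subset: "A \<subseteq> V \<Longrightarrow> boot_step V E r A i \<subseteq> V"
  by (induction i) auto

lemma percolating_self: "percolating V E r V"
  unfolding percolating_def
  using boot_step_subset[of V V E r] boot_step.simps(1)[of V E r V] by blast

lemma percolating_first_activation:
  assumes "percolating V E r A" "A \<noteq> V"
  obtains v where "v \<in> V - A" "r \<le> card (nbhd V E v \<inter> A)"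
proof -
  have "boot_step V E r A i = A" if "\<forall>v\<in>V - A. \<not> r \<le> card (nbhd V E v \<inter> A)" for i
    using that by (induction i) auto
  then show ?thesis
    using assms that unfolding percolating_def by force
qed

lemma boot_step_restrict:
  assumes "V' \<subseteq> V" "finite V"
    and few_outside: "\<And>v. v \<in> V' \<Longrightarrow> card (nbhd V E v - V') \<le> k"
  shows "boot_step V E r A i \<inter> V' \<subseteq> boot_step V' E (r - k) (A \<inter> V') i"
proof (induction i)
  case 0
  show ?case by simp
next
  case (Suc i)
  let ?B = "boot_step V E r A i" and ?B' = "boot_step V' E (r - k) (A \<inter> V') i"
  show ?case
  proof
    fix v assume v: "v \<in> boot_step V E r A (Suc i) \<inter> V'"
    show "v \<in> boot_step V' E (r - k) (A \<inter> V') (Suc i)"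
    proof (cases "v \<in> ?B")
      case True
      then show ?thesis using Suc.IH v by auto
    next
      case False
      with v have active: "r \<le> card (nbhd V E v \<inter> ?B)" by simp
      have "nbhd V E v \<inter> ?B \<subseteq> (nbhd V' E v \<inter> ?B') \<union> (nbhd V E v - V')"
        using Suc.IH assms(1) unfolding nbhd_def by blast
      moreover have "finite (nbhd V' E v \<inter> ?B')" "finite (nbhd V E v - V')"
        using assms(1,2) unfolding nbhd_def by (auto intro: finite_subset)
      ultimately have "card (nbhd V E v \<inter> ?B)
          \<le> card (nbhd V' E v \<inter> ?B') + card (nbhd V E v - V')"
        by (meson card_Un_le card_mono finite_UnI order_trans)
      with active few_outside[of v] v have "r - k \<le> card (nbhd V' E v \<inter> ?B')" by simp
      with v show ?thesis by simp
    qed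
  qed
qed

lemma percolating_restrict:
  assumes "percolating V E r A" "V' \<subseteq> V" "finite V"
    and "\<And>v. v \<in> V' \<Longrightarrow> card (nbhd V E v - V') \<le> k"
  shows "percolating V' E (r - k) (A \<inter> V')"
proof -
  have "V' \<subseteq> (\<Union>i. boot_step V' E (r - k) (A \<inter> V') i)"
    using assms(1,2) boot_step_restrict[OF assms(2-4), of r A]
    unfolding percolating_def by blast
  then show ?thesis
    unfolding percolating_def using boot_step_subset[of "A \<inter> V'" V'] by blast
qed

lemma min_perc_lower_bound:
  assumes "finite V" "\<And>A. percolating V E r A \<Longrightarrow> b \<le> card A"
  shows "b \<le> min_perc V E r"
proof -
  have "{A. percolating V E r A} \<subseteq> Pow V"
    unfolding percolating_def by blast
  then have "finite (card ` {A. percolating V E r A})"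
    using assms(1) by (meson finite_Pow_iff finite_imageI finite_subset)
  moreover have "card ` {A. percolating V E r A} \<noteq> {}"
    using percolating_self by blast
  ultimately show ?thesis
    unfolding min_perc_def using assms(2) by (auto simp: Min_ge_iff)
qed

definition pairs :: "'a set \<Rightarrow> 'a set set" where
  "pairs W = {e. e \<subseteq> W \<and> card e = 2}"

lemma LK_vertices_eq_pairs: "LK_vertices n = pairs {0..<n}"
  unfolding LK_vertices_def pairs_def by simp

lemma finite_pairs: "finite W \<Longrightarrow> finite (pairs W)"
  unfolding pairs_def by (rule finite_subset[of _ "Pow W"]) auto

lemma card_pairs: "finite W \<Longrightarrow> card (pairs W) = card W choose 2"
  unfolding pairs_def by (rule n_subsets)

lemma card_nbhd_pairs_Diff_le_4:
  assumes "v \<in> pairs (W - {u, w})"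
  shows "card (nbhd (pairs W) LK_adj v - pairs (W - {u, w})) \<le> 4"
proof -
  from assms obtain x y where v: "v = {x, y}" "x \<noteq> y" "x \<notin> {u, w}" "y \<notin> {u, w}"
    unfolding pairs_def by (auto simp: card_2_iff)
  have "nbhd (pairs W) LK_adj v - pairs (W - {u, w}) \<subseteq> set [{x, u}, {x, w}, {y, u}, {y, w}]"
  proof
    fix e assume e: "e \<in> nbhd (pairs W) LK_adj v - pairs (W - {u, w})"
    then obtain a b where "a \<in> e \<inter> {x, y}" "b \<in> e \<inter> {u, w}" "card e = 2"
      unfolding nbhd_def pairs_def LK_adj_def v by auto
    with v have "e = {a, b}" "a \<in> {x, y}" "b \<in> {u, w}"
      by (auto simp: card_2_iff)
    then show "e \<in> set [{x, u}, {x, w}, {y, u}, {y, w}]" by auto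
  qed
  then have "card (nbhd (pairs W) LK_adj v - pairs (W - {u, w}))
      \<le> card (set [{x, u}, {x, w}, {y, u}, {y, w}])"
    by (rule card_mono[rotated]) simp
  also have "\<dots> \<le> length [{x, u}, {x, w}, {y, u}, {y, w}]"
    by (rule card_length)
  finally show ?thesis
    by simp
qed

lemma percolating_pairs_Diff:
  assumes "percolating (pairs W) LK_adj r A" "finite W"
  shows "percolating (pairs (W - {u, w})) LK_adj (r - 4) (A \<inter> pairs (W - {u, w}))"
proof (rule percolating_restrict[OF assms(1)])
  show "pairs (W - {u, w}) \<subseteq> pairs W"
    unfolding pairs_def by blast
qed (simp_all add: assms(2) finite_pairs card_nbhd_pairs_Diff_le_4)

lemma nbhd_pair_disjoint_pairs_Diff:
  "nbhd (pairs W) LK_adj {u, w} \<inter> pairs (W - {u, w}) = {}"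
  unfolding nbhd_def pairs_def LK_adj_def by auto

lemma square_div_8_le_choose_2:
  assumes "r + 4 \<le> 2 * m"
  shows "(r + 2)^2 div 8 \<le> m choose 2"
proof -
  have "(r + 2)^2 \<le> (2 * (m - 1))^2"
    using assms by (intro power_mono) simp_all
  also have "\<dots> \<le> 4 * (m * (m - 1))"
    by (simp add: power2_eq_square)
  finally have "(r + 2)^2 div 8 \<le> 4 * (m * (m - 1)) div 8"
    by (rule div_le_mono)
  then show ?thesis
    by (simp add: choose_two)
qed

lemma percolating_pairs_split:
  assumes "percolating (pairs W) LK_adj r A" "A \<noteq> pairs W" "finite W"
  obtains u w where "u \<in> W" "w \<in> W" "u \<noteq> w"
    and "r + card (A \<inter> pairs (W - {u, w})) \<le> card A"
    and "percolating (pairs (W - {u, w})) LK_adj (r - 4) (A \<inter> pairs (W - {u, w}))"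
proof -
  obtain v where v: "v \<in> pairs W - A" "r \<le> card (nbhd (pairs W) LK_adj v \<inter> A)"
    using percolating_first_activation[OF assms(1,2)] .
  then obtain u w where uw: "v = {u, w}" "u \<noteq> w" "u \<in> W" "w \<in> W"
    unfolding pairs_def by (auto simp: card_2_iff)
  have "finite A"
    using assms(1,3) finite_pairs unfolding percolating_def by (blast intro: finite_subset)
  then have "card (nbhd (pairs W) LK_adj v \<inter> A) + card (A \<inter> pairs (W - {u, w})) \<le> card A"
    using nbhd_pair_disjoint_pairs_Diff[of W u w] uw(1)
    by (subst card_Un_disjoint[symmetric]) (auto intro: card_mono)
  with v(2) have "r + card (A \<inter> pairs (W - {u, w})) \<le> card A"
    by linarith
  with uw percolating_pairs_Diff[OF assms(1,3)] show ?thesis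
    using that by blast
qed

lemma card_percolating_pairs_ge:
  assumes "finite W" "r + 4 \<le> 2 * card W" "percolating (pairs W) LK_adj r A"
  shows "(r + 2)^2 div 8 \<le> card A"
  using assms
proof (induction r arbitrary: W A rule: less_induct)
  case (less r)
  show ?case
  proof (cases "A = pairs W")
    case True
    then have "card A = card W choose 2"
      using less.prems(1) card_pairs by simp
    then show ?thesis
      using square_div_8_le_choose_2[OF less.prems(2)] by simp
  next
    case False
    with less.prems obtain u w where uw: "u \<in> W" "w \<in> W" "u \<noteq> w"
      and card_A: "r + card (A \<inter> pairs (W - {u, w})) \<le> card A"
      and perc: "percolating (pairs (W - {u, w})) LK_adj (r - 4) (A \<inter> pairs (W - {u, w}))"
      using percolating_pairs_split by metis
    show ?thesis
    proof (cases "r \<le> 4")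
      case True
      then have "r \<in> {0, 1, 2, 3, 4}"
        by auto
      then have "(r + 2)^2 div 8 \<le> r"
        by (auto simp: power2_eq_square)
      with card_A show ?thesis
        by linarith
    next
      case False
      then obtain s where r: "r = s + 4"
        by (metis add.commute le_add_diff_inverse nat_le_linear)
      have "card (W - {u, w}) = card W - 2"
        using uw less.prems(1) by (simp add: card_Diff_subset)
      then have "(s + 2)^2 div 8 \<le> card (A \<inter> pairs (W - {u, w}))"
        using less.IH[of s "W - {u, w}"] less.prems(1,2) perc r by simp
      moreover have "(r + 2)^2 = (s + 2)^2 + 8 * r"
        unfolding r by (simp add: power2_eq_square algebra_simps)
      ultimately show ?thesis
        using card_A by simp
    qed
  qed
qed

theorem lemma5p3:
  fixes n r :: nat
  assumes "n > 0" and "r > 0" and "int n \<ge> \<lceil>real r / 2\<rceil> + 2"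
  shows "min_perc (LK_vertices n) LK_adj r \<ge> (r + 2)^2 div 8"
proof -
  have "real r / 2 \<le> of_int \<lceil>real r / 2\<rceil>"
    by (rule le_of_int_ceiling)
  with assms(3) have "r + 4 \<le> 2 * card {0..<n}"
    by simp linarith
  then show ?thesis
    unfolding LK_vertices_eq_pairs
    by (intro min_perc_lower_bound finite_pairs card_percolating_pairs_ge) simp_all
qed

end
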